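(* Let $G$ be a connected graph with $n$ vertices and $k\ge1$. Let $B_k(G)$ be the sum of the spanning tree weights of all balanced connected $k$-partitions of $G$, and let $\tau_k(G)$ be the number of $k$-splittable spanning trees of $G$. Then $B_k(G)$ and $\tau_k(G)$ are within a factor $n^{2(k-1)}$ of each other, i.e. $n^{-2(k-1)}\tau_k(G)\le B_k(G)\le n^{2(k-1)}\tau_k(G)$.
   Context: A tree $T$ is $k$-splittable if there exist $k-1$ edges of $T$ whose removal leaves a forest whose $k$ connected components all have the same number of vertices. A connected $k$-partition of $G=(V,E)$ is a partition of $V$ into $k$ nonempty sets (pieces) each inducing a connected subgraph; it is balanced if all pieces have equal size. For a graph $H$, $\tau(H)$ is its number of spanning trees, and the spanning tree weight of a connected partition $P$ is $\prod_{S\in P}\tau(G[S])$. *)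

theory Defs
  imports Complex_Main "HOL-Library.Disjoint_Sets"
begin

definition simple_graph :: "'a set \<Rightarrow> 'a set set \<Rightarrow> bool" where
  "simple_graph V E \<longleftrightarrow> finite V \<and> (\<forall>e\<in>E. e \<subseteq> V \<and> card e = 2)"

definition adj :: "'a set \<Rightarrow> 'a set set \<Rightarrow> ('a \<times> 'a) set" where
  "adj S F = {(u,v). u \<in> S \<and> v \<in> S \<and> {u,v} \<in> F}"

definition connected_graph :: "'a set \<Rightarrow> 'a set set \<Rightarrow> bool" where
  "connected_graph S F \<longleftrightarrow> S \<noteq> {} \<and> (\<forall>u\<in>S. \<forall>v\<in>S. (u,v) \<in> (adj S F)\<^sup>*)"

definition components :: "'a set \<Rightarrow> 'a set set \<Rightarrow> 'a set set" where
  "components S F = S // {(u,v). u \<in> S \<and> v \<in> S \<and> (u,v) \<in> (adj S F)\<^sup>*}"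

definition induced_edges :: "'a set set \<Rightarrow> 'a set \<Rightarrow> 'a set set" where
  "induced_edges E S = {e \<in> E. e \<subseteq> S}"

text \<open>A tree on vertex set S with edge set T: connected and acyclic, where acyclic
  means that no edge lies on a cycle, i.e. deleting any edge disconnects the graph.\<close>
definition is_tree :: "'a set \<Rightarrow> 'a set set \<Rightarrow> bool" where
  "is_tree S T \<longleftrightarrow> connected_graph S T \<and> (\<forall>e\<in>T. \<not> connected_graph S (T - {e}))"

definition spanning_trees :: "'a set \<Rightarrow> 'a set set \<Rightarrow> 'a set set set" where
  "spanning_trees V E = {T. T \<subseteq> E \<and> is_tree V T}"

definition num_spanning_trees :: "'a set \<Rightarrow> 'a set set \<Rightarrow> nat" where
  "num_spanning_trees V E = card (spanning_trees V E)"

definition splittable :: "nat \<Rightarrow> 'a set \<Rightarrow> 'a set set \<Rightarrow> bool" where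
  "splittable k V T \<longleftrightarrow> (\<exists>F. F \<subseteq> T \<and> card F = k - 1 \<and>
      card (components V (T - F)) = k \<and>
      (\<forall>A\<in>components V (T - F). \<forall>B\<in>components V (T - F). card A = card B))"

definition connected_partition :: "nat \<Rightarrow> 'a set \<Rightarrow> 'a set set \<Rightarrow> 'a set set \<Rightarrow> bool" where
  "connected_partition k V E P \<longleftrightarrow> partition_on V P \<and> card P = k \<and>
      (\<forall>S\<in>P. connected_graph S (induced_edges E S))"

definition balanced_connected_partition :: "nat \<Rightarrow> 'a set \<Rightarrow> 'a set set \<Rightarrow> 'a set set \<Rightarrow> bool" where
  "balanced_connected_partition k V E P \<longleftrightarrow> connected_partition k V E P \<and>
      (\<forall>S\<in>P. \<forall>S'\<in>P. card S = card S')"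

definition st_weight :: "'a set set \<Rightarrow> 'a set set \<Rightarrow> nat" where
  "st_weight E P = (\<Prod>S\<in>P. num_spanning_trees S (induced_edges E S))"

definition B_k :: "nat \<Rightarrow> 'a set \<Rightarrow> 'a set set \<Rightarrow> nat" where
  "B_k k V E = (\<Sum>P\<in>{P. balanced_connected_partition k V E P}. st_weight E P)"

definition tau_k :: "nat \<Rightarrow> 'a set \<Rightarrow> 'a set set \<Rightarrow> nat" where
  "tau_k k V E = card {T \<in> spanning_trees V E. splittable k V T}"

end

theory Submission
  imports Defs
begin

text \<open>Double counting of balanced cuts: pairs (T, F) of a spanning tree T and k - 1 of its
  edges F whose removal leaves k components of equal size. Every k-splittable tree admits at
  least one and at most n^(2(k-1)) such F, since a simple graph has at most n^2 edges.
  Cutting T along F yields a balanced connected partition together with a spanning tree of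
  each part, i.e. one of the B_k objects. This map is onto because G is connected: the union
  of the part trees is a forest whose components are the parts, and any spanning tree
  extending it is cut back into it along the added edges. Since T is recovered from its
  image together with F, each fibre has at most n^(2(k-1)) elements.\<close>

lemma adj_mono: "S \<subseteq> S' \<Longrightarrow> F \<subseteq> F' \<Longrightarrow> adj S F \<subseteq> adj S' F'"
  unfolding adj_def by auto

lemma rtrancl_adj_mono:
  "S \<subseteq> S' \<Longrightarrow> F \<subseteq> F' \<Longrightarrow> (x,y) \<in> (adj S F)\<^sup>* \<Longrightarrow> (x,y) \<in> (adj S' F')\<^sup>*"
  using rtrancl_mono[OF adj_mono] by blast

lemma sym_adj: "sym (adj S F)"
  unfolding adj_def sym_def by (auto simp: insert_commute)

lemma rtrancl_adj_sym: "(x,y) \<in> (adj S F)\<^sup>* \<Longrightarrow> (y,x) \<in> (adj S F)\<^sup>*"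
  using sym_rtrancl[OF sym_adj] by (rule symD)

lemma rtrancl_adj_edge: "u \<in> S \<Longrightarrow> v \<in> S \<Longrightarrow> {u,v} \<in> F \<Longrightarrow> (u,v) \<in> (adj S F)\<^sup>*"
  by (rule r_into_rtrancl) (auto simp: adj_def)

lemma rtrancl_adj_insert_edgeD:
  assumes "(x,y) \<in> (adj S (insert {u,v} F))\<^sup>*"
  shows "(x,y) \<in> (adj S F)\<^sup>* \<or> ((x,u) \<in> (adj S F)\<^sup>* \<and> (v,y) \<in> (adj S F)\<^sup>*)
     \<or> ((x,v) \<in> (adj S F)\<^sup>* \<and> (u,y) \<in> (adj S F)\<^sup>*)"
  using assms
proof (induction rule: rtrancl_induct)
  case base then show ?case by simp
next
  case (step y z)
  let ?R = "(adj S F)\<^sup>*"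
  from step(2) have yz: "y \<in> S" "z \<in> S" "{y,z} = {u,v} \<or> {y,z} \<in> F" by (auto simp: adj_def)
  show ?case
  proof (cases "{y,z} \<in> F")
    case True
    then have "(y,z) \<in> ?R" using yz rtrancl_adj_edge by metis
    then show ?thesis using step(3) by (meson rtrancl_trans)
  next
    case False
    then have "(y = u \<and> z = v) \<or> (y = v \<and> z = u)" using yz by (auto simp: doubleton_eq_iff)
    then show ?thesis using step(3) by (metis rtrancl.rtrancl_refl rtrancl_adj_sym)
  qed
qed

lemma rtrancl_adj_insert_edgeI:
  assumes "u \<in> S" "v \<in> S" "(x,u) \<in> (adj S F)\<^sup>*" "(v,y) \<in> (adj S F)\<^sup>*"
  shows "(x,y) \<in> (adj S (insert {u,v} F))\<^sup>*"
proof -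
  have "(x,u) \<in> (adj S (insert {u,v} F))\<^sup>*" "(v,y) \<in> (adj S (insert {u,v} F))\<^sup>*"
    using assms rtrancl_adj_mono[of S S F "insert {u,v} F"] by auto
  moreover have "(u,v) \<in> (adj S (insert {u,v} F))\<^sup>*" using assms by (intro rtrancl_adj_edge) auto
  ultimately show ?thesis by (meson rtrancl_trans)
qed

lemma rtrancl_adj_confined:
  assumes "(x,y) \<in> (adj V F)\<^sup>*" "x \<in> S"
    and closed: "\<And>a b. a \<in> S \<Longrightarrow> b \<in> V \<Longrightarrow> {a,b} \<in> F \<Longrightarrow> b \<in> S \<and> {a,b} \<in> F'"
  shows "(x,y) \<in> (adj S F')\<^sup>* \<and> y \<in> S"
  using assms(1)
proof (induction rule: rtrancl_induct)
  case base then show ?case using assms(2) by simp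
next
  case (step y z)
  then have "y \<in> S" "z \<in> V" "{y,z} \<in> F" by (auto simp: adj_def)
  then have "z \<in> S" "{y,z} \<in> F'" using closed by auto
  then have "(y,z) \<in> (adj S F')\<^sup>*" using \<open>y \<in> S\<close> rtrancl_adj_edge by metis
  then show ?case using step \<open>z \<in> S\<close> by (meson rtrancl_trans)
qed

lemma connected_graph_edge_between_components:
  assumes "connected_graph V E" "\<not> connected_graph V U"
  obtains u v where "u \<in> V" "v \<in> V" "{u,v} \<in> E" "(u,v) \<notin> (adj V U)\<^sup>*"
proof -
  obtain x y where xy: "x \<in> V" "y \<in> V" "(x,y) \<notin> (adj V U)\<^sup>*"
    using assms unfolding connected_graph_def by auto
  have "(x,y) \<in> (adj V E)\<^sup>*" using assms(1) xy unfolding connected_graph_def by auto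
  then have "(x,y) \<in> (adj V U)\<^sup>* \<or>
      (\<exists>u v. u \<in> V \<and> v \<in> V \<and> {u,v} \<in> E \<and> (u,v) \<notin> (adj V U)\<^sup>*)"
  proof (induction rule: rtrancl_induct)
    case base then show ?case by simp
  next
    case (step y z)
    then have "y \<in> V" "z \<in> V" "{y,z} \<in> E" by (auto simp: adj_def)
    then show ?case using step(3) by (meson rtrancl_trans)
  qed
  then show ?thesis using xy that by blast
qed

lemma simple_graph_mono: "simple_graph V E \<Longrightarrow> F \<subseteq> E \<Longrightarrow> simple_graph V F"
  unfolding simple_graph_def by auto

lemma simple_graph_induced:
  "simple_graph V E \<Longrightarrow> C \<subseteq> V \<Longrightarrow> simple_graph C (induced_edges E C)"
  unfolding simple_graph_def induced_edges_def by (auto intro: finite_subset)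

lemma simple_graph_edgeD:
  "simple_graph S F \<Longrightarrow> e \<in> F \<Longrightarrow> \<exists>u v. e = {u,v} \<and> u \<noteq> v \<and> u \<in> S \<and> v \<in> S"
  unfolding simple_graph_def by (metis card_2_iff insert_subset)

lemma simple_graph_finite_edges: "simple_graph V E \<Longrightarrow> finite E"
  unfolding simple_graph_def by (meson Pow_iff finite_Pow_iff finite_subset subsetI)

definition forest :: "'a set \<Rightarrow> 'a set set \<Rightarrow> bool" where
  "forest S F \<longleftrightarrow> (\<forall>u v. {u,v} \<in> F \<longrightarrow> (u,v) \<notin> (adj S (F - {{u,v}}))\<^sup>*)"

lemma forest_subgraph: "forest V T \<Longrightarrow> C \<subseteq> V \<Longrightarrow> T' \<subseteq> T \<Longrightarrow> forest C T'"
  unfolding forest_def by (meson Diff_mono order_refl rtrancl_adj_mono subsetD)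

lemma connected_graph_remove_edge_iff:
  assumes "connected_graph S T" "{u,v} \<in> T" "u \<in> S" "v \<in> S"
  shows "connected_graph S (T - {{u,v}}) \<longleftrightarrow> (u,v) \<in> (adj S (T - {{u,v}}))\<^sup>*"
proof
  assume "connected_graph S (T - {{u,v}})" then show "(u,v) \<in> (adj S (T - {{u,v}}))\<^sup>*"
    using assms unfolding connected_graph_def by auto
next
  assume uv: "(u,v) \<in> (adj S (T - {{u,v}}))\<^sup>*"
  have T: "T = insert {u,v} (T - {{u,v}})" using assms by auto
  show "connected_graph S (T - {{u,v}})" unfolding connected_graph_def
  proof (intro conjI ballI)
    show "S \<noteq> {}" using assms by auto
    fix x y assume "x \<in> S" "y \<in> S"
    then have "(x,y) \<in> (adj S (insert {u,v} (T - {{u,v}})))\<^sup>*"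
      using assms T unfolding connected_graph_def by metis
    from rtrancl_adj_insert_edgeD[OF this] show "(x,y) \<in> (adj S (T - {{u,v}}))\<^sup>*"
      using uv rtrancl_adj_sym by (meson rtrancl_trans)
  qed
qed

lemma is_tree_iff_forest:
  assumes "simple_graph S T"
  shows "is_tree S T \<longleftrightarrow> connected_graph S T \<and> forest S T"
proof -
  have "(\<forall>e\<in>T. \<not> connected_graph S (T - {e})) \<longleftrightarrow> forest S T" if c: "connected_graph S T"
  proof -
    have "\<not> connected_graph S (T - {{u,v}}) \<longleftrightarrow> (u,v) \<notin> (adj S (T - {{u,v}}))\<^sup>*"
      if "{u,v} \<in> T" for u v
    proof -
      obtain a b where "{u,v} = {a,b}" "a \<in> S" "b \<in> S"
        using simple_graph_edgeD[OF assms \<open>{u,v} \<in> T\<close>] by metis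
      then have "u \<in> S" "v \<in> S" by (auto simp: doubleton_eq_iff)
      then show ?thesis using connected_graph_remove_edge_iff[OF c that] by simp
    qed
    then show ?thesis unfolding forest_def by (metis simple_graph_edgeD[OF assms])
  qed
  then show ?thesis unfolding is_tree_def by blast
qed

lemma forest_insert_edge:
  assumes "simple_graph S U" "forest S U" "u \<in> S" "v \<in> S" "(u,v) \<notin> (adj S U)\<^sup>*"
  shows "forest S (insert {u,v} U)"
  unfolding forest_def
proof (intro allI impI notI)
  fix a b assume ab: "{a,b} \<in> insert {u,v} U"
    and p: "(a,b) \<in> (adj S (insert {u,v} U - {{a,b}}))\<^sup>*"
  show False
  proof (cases "{a,b} = {u,v}")
    case True
    then have "(a,b) \<in> (adj S U)\<^sup>*" using rtrancl_adj_mono[OF _ _ p, of S U] by auto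
    then show False using True assms(5) rtrancl_adj_sym by (metis doubleton_eq_iff)
  next
    case False
    then have abU: "{a,b} \<in> U" using ab by auto
    then obtain a' b' where "{a,b} = {a',b'}" "a' \<in> S" "b' \<in> S"
      using simple_graph_edgeD[OF assms(1)] by metis
    then have abS: "a \<in> S" "b \<in> S" by (auto simp: doubleton_eq_iff)
    have eq: "insert {u,v} U - {{a,b}} = insert {u,v} (U - {{a,b}})" using False by auto
    let ?R = "(adj S (U - {{a,b}}))\<^sup>*"
    have "(a,b) \<notin> ?R" using assms(2) abU unfolding forest_def by auto
    moreover have "\<not> ((a,u) \<in> ?R \<and> (v,b) \<in> ?R)" "\<not> ((a,v) \<in> ?R \<and> (u,b) \<in> ?R)"
      \<comment> \<open>otherwise the path through the edge {a,b} would connect u and v in U\<close>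
      using assms(5) rtrancl_adj_edge[OF abS abU] rtrancl_adj_sym
        rtrancl_adj_mono[of S S "U - {{a,b}}" U] by (meson Diff_subset rtrancl_trans order_refl)+
    ultimately show False using rtrancl_adj_insert_edgeD[OF p[unfolded eq]] by blast
  qed
qed

definition component :: "'a set \<Rightarrow> 'a set set \<Rightarrow> 'a \<Rightarrow> 'a set" where
  "component S F x = {y \<in> S. (x,y) \<in> (adj S F)\<^sup>*}"

lemma components_eq_image: "components S F = component S F ` S"
  unfolding components_def quotient_def component_def by auto

lemma partition_on_components: "partition_on S (components S F)"
proof -
  have "equiv S {(u,v). u \<in> S \<and> v \<in> S \<and> (u,v) \<in> (adj S F)\<^sup>*}"
    unfolding equiv_def refl_on_def sym_def trans_def
    using rtrancl_adj_sym by (auto intro: rtrancl_trans)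
  then show ?thesis unfolding components_def by (rule partition_on_quotient)
qed

lemma component_self: "x \<in> S \<Longrightarrow> x \<in> component S F x"
  unfolding component_def by auto

lemma component_eq:
  assumes "(x,y) \<in> (adj S F)\<^sup>*" shows "component S F x = component S F y"
  using assms rtrancl_adj_sym[OF assms] unfolding component_def by (blast intro: rtrancl_trans)

lemma finite_components: "finite S \<Longrightarrow> finite (components S F)"
  unfolding components_eq_image by auto

lemma connected_graph_iff_card_components:
  assumes "finite S" "S \<noteq> {}"
  shows "connected_graph S F \<longleftrightarrow> card (components S F) = 1"
proof
  assume "connected_graph S F"
  then have "components S F = {S}"
    using assms unfolding components_eq_image connected_graph_def component_def by auto
  then show "card (components S F) = 1" by simp
next
  assume "card (components S F) = 1"
  then obtain C where C: "components S F = {C}" by (meson card_1_singletonE)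
  show "connected_graph S F" unfolding connected_graph_def
  proof (intro conjI ballI)
    fix x y assume "x \<in> S" "y \<in> S"
    then have "component S F x = component S F y"
      using C unfolding components_eq_image by blast
    then show "(x,y) \<in> (adj S F)\<^sup>*"
      using component_self[OF \<open>y \<in> S\<close>] unfolding component_def by auto
  qed fact
qed

lemma component_insert_edge:
  assumes "u \<in> S" "v \<in> S" "x \<in> S"
  shows "component S (insert {u,v} F) x =
    (if x \<in> component S F u \<union> component S F v then component S F u \<union> component S F v
     else component S F x)"
proof -
  let ?R = "(adj S F)\<^sup>*"
  have "insert {v,u} F = insert {u,v} F" by (simp add: insert_commute)
  then have "y \<in> component S (insert {u,v} F) x \<longleftrightarrow> y \<in> S \<and>
      ((x,y) \<in> ?R \<or> ((x,u) \<in> ?R \<and> (v,y) \<in> ?R) \<or> ((x,v) \<in> ?R \<and> (u,y) \<in> ?R))" for y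
    unfolding component_def using assms
      rtrancl_adj_insert_edgeD[of x y S u v F] rtrancl_adj_insert_edgeI[of u S v x F y]
      rtrancl_adj_insert_edgeI[of v S u x F y] rtrancl_adj_mono[of S S F "insert {u,v} F" x y]
    by auto
  then show ?thesis
    unfolding component_def using assms by (auto dest: rtrancl_adj_sym intro: rtrancl_trans)
qed

lemma components_insert_edge:
  assumes "u \<in> S" "v \<in> S"
  shows "components S (insert {u,v} F) = insert (component S F u \<union> component S F v)
    (components S F - {component S F u, component S F v})"
proof -
  have "x \<in> component S F u \<union> component S F v \<longleftrightarrow>
      component S F x = component S F u \<or> component S F x = component S F v" if "x \<in> S" for x
    using that assms component_self[of _ S F] unfolding component_def
    by (auto dest: rtrancl_adj_sym intro: rtrancl_trans)
  then show ?thesis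
    unfolding components_eq_image using assms component_self[of _ S F]
    by (auto simp: component_insert_edge image_iff)
qed

lemma card_components_insert_edge:
  assumes "finite S" "u \<in> S" "v \<in> S" "(u,v) \<notin> (adj S F)\<^sup>*"
  shows "card (components S (insert {u,v} F)) + 1 = card (components S F)"
proof -
  let ?Cu = "component S F u" and ?Cv = "component S F v"
  have in_comps: "?Cu \<in> components S F" "?Cv \<in> components S F"
    using assms unfolding components_eq_image by auto
  have "?Cu \<noteq> ?Cv"
    using component_self[OF assms(3)] assms(4) unfolding component_def by auto
  moreover have "?Cu \<union> ?Cv \<notin> components S F - {?Cu, ?Cv}"
  proof
    assume "?Cu \<union> ?Cv \<in> components S F - {?Cu, ?Cv}"
    then obtain x where x: "?Cu \<union> ?Cv = component S F x" "?Cu \<union> ?Cv \<noteq> ?Cu"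
      unfolding components_eq_image by auto
    then have "(x,u) \<in> (adj S F)\<^sup>*"
      using component_self[OF assms(2)] unfolding component_def by auto
    then show False using x component_eq by metis
  qed
  moreover have "card {?Cu, ?Cv} \<le> card (components S F)"
    using in_comps finite_components[OF assms(1)] by (intro card_mono) auto
  ultimately show ?thesis
    using in_comps finite_components[OF assms(1)]
    by (simp add: components_insert_edge[OF assms(2,3)] card_Diff_subset)
qed

lemma forest_extends_to_spanning_tree:
  assumes "simple_graph V E" "connected_graph V E" "U \<subseteq> E" "forest V U"
  shows "\<exists>T. U \<subseteq> T \<and> T \<subseteq> E \<and> is_tree V T \<and>
    card (T - U) + 1 = card (components V U)"
  using assms(3,4)
proof (induction "card (components V U)" arbitrary: U rule: less_induct)
  case less
  have fV: "finite V" and neV: "V \<noteq> {}"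
    using assms unfolding simple_graph_def connected_graph_def by auto
  have simple_U: "simple_graph V U" using simple_graph_mono[OF assms(1) less.prems(1)] .
  show ?case
  proof (cases "connected_graph V U")
    case True
    then have "is_tree V U" using less.prems(2) is_tree_iff_forest[OF simple_U] by simp
    moreover have "card (components V U) = 1"
      using True connected_graph_iff_card_components[OF fV neV] by simp
    ultimately show ?thesis using less.prems(1) by (intro exI[of _ U]) auto
  next
    case False
    then obtain u v where uv: "u \<in> V" "v \<in> V" "{u,v} \<in> E" "(u,v) \<notin> (adj V U)\<^sup>*"
      using connected_graph_edge_between_components[OF assms(2)] by blast
    let ?U = "insert {u,v} U"
    have card_U: "card (components V ?U) + 1 = card (components V U)"
      using card_components_insert_edge[OF fV uv(1,2,4)] .
    have fewer: "card (components V ?U) < card (components V U)" using card_U by linarith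
    have "?U \<subseteq> E" using less.prems(1) uv(3) by blast
    moreover have "forest V ?U" using forest_insert_edge[OF simple_U less.prems(2) uv(1,2,4)] .
    ultimately obtain T where T: "?U \<subseteq> T" "T \<subseteq> E" "is_tree V T"
        "card (T - ?U) + 1 = card (components V ?U)"
      using less.hyps[OF fewer] by blast
    have new_edge: "{u,v} \<in> T - U" using T(1) rtrancl_adj_edge[OF uv(1,2)] uv(4) by blast
    moreover have "finite (T - U)"
      using finite_subset[OF T(2) simple_graph_finite_edges[OF assms(1)]] by (rule finite_Diff)
    ultimately have "card (T - U) > 0" by (auto simp: card_gt_0_iff)
    then have "card (T - U) = card (T - ?U) + 1"
      using new_edge card_Diff_insert[of "{u,v}" T U] by simp
    then show ?thesis using T card_U by (intro exI[of _ T]) auto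
  qed
qed

lemma connected_graph_component:
  assumes "x \<in> V"
  shows "connected_graph (component V W x) (induced_edges W (component V W x))"
proof -
  let ?C = "component V W x"
  have closed: "b \<in> ?C \<and> {a,b} \<in> induced_edges W ?C"
    if "a \<in> ?C" "b \<in> V" "{a,b} \<in> W" for a b
  proof -
    have "(x,b) \<in> (adj V W)\<^sup>*"
      using that rtrancl_adj_edge[of a V b W] unfolding component_def
      by (auto intro: rtrancl_trans)
    then show ?thesis using that unfolding component_def induced_edges_def by auto
  qed
  have from_x: "(x,y) \<in> (adj ?C (induced_edges W ?C))\<^sup>*" if "y \<in> ?C" for y
  proof -
    have "(x,y) \<in> (adj V W)\<^sup>*" using that unfolding component_def by simp
    from rtrancl_adj_confined[OF this component_self[OF assms] closed] show ?thesis by simp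
  qed
  show ?thesis unfolding connected_graph_def
  proof (intro conjI ballI)
    show "?C \<noteq> {}" using component_self[OF assms] by blast
    fix y z assume "y \<in> ?C" "z \<in> ?C"
    then show "(y,z) \<in> (adj ?C (induced_edges W ?C))\<^sup>*"
      using from_x rtrancl_adj_sym by (meson rtrancl_trans)
  qed
qed

lemma spanning_trees_imp_connected:
  assumes "T \<in> spanning_trees S E"
  shows "connected_graph S E"
proof -
  have "T \<subseteq> E" "connected_graph S T"
    using assms unfolding spanning_trees_def is_tree_def by auto
  then show ?thesis
    unfolding connected_graph_def using rtrancl_adj_mono[OF order_refl \<open>T \<subseteq> E\<close>] by blast
qed

lemma spanning_tree_of_component:
  assumes "simple_graph V E" "T \<in> spanning_trees V E" "W \<subseteq> T" "C \<in> components V W"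
  shows "induced_edges W C \<in> spanning_trees C (induced_edges E C)"
proof -
  obtain x where x: "x \<in> V" "C = component V W x"
    using assms(4) unfolding components_eq_image by auto
  have CV: "C \<subseteq> V" using x unfolding component_def by auto
  have T: "T \<subseteq> E" "is_tree V T" using assms(2) unfolding spanning_trees_def by auto
  have sub: "induced_edges W C \<subseteq> induced_edges E C"
    using assms(3) T(1) unfolding induced_edges_def by auto
  have "forest V T"
    using T is_tree_iff_forest[OF simple_graph_mono[OF assms(1) T(1)]] by simp
  then have "forest C (induced_edges W C)"
    by (rule forest_subgraph[OF _ CV]) (use assms(3) in \<open>auto simp: induced_edges_def\<close>)
  moreover have "simple_graph C (induced_edges W C)"
    using simple_graph_induced[OF simple_graph_mono[OF assms(1)] CV] T(1) assms(3) by blast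
  moreover have "connected_graph C (induced_edges W C)"
    using connected_graph_component[OF x(1)] x(2) by simp
  ultimately have "is_tree C (induced_edges W C)" using is_tree_iff_forest by blast
  then show ?thesis using sub unfolding spanning_trees_def by blast
qed

context
  fixes V E P f
  assumes simple: "simple_graph V E"
    and partition: "partition_on V P"
    and trees: "f \<in> (\<Pi>\<^sub>E S\<in>P. spanning_trees S (induced_edges E S))"
begin

private lemma tree_on_part: "S \<in> P \<Longrightarrow> f S \<subseteq> induced_edges E S \<and> is_tree S (f S)"
  using trees unfolding spanning_trees_def by auto

private lemma part_unique: "S \<in> P \<Longrightarrow> S' \<in> P \<Longrightarrow> x \<in> S \<Longrightarrow> x \<in> S' \<Longrightarrow> S = S'"
  using partition unfolding partition_on_def disjoint_def by blast

lemma union_trees_subset: "\<Union>(f ` P) \<subseteq> E"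
  using tree_on_part unfolding induced_edges_def by blast

lemma union_trees_edge_in_part:
  assumes "S \<in> P" "a \<in> S" "{a,b} \<in> \<Union>(f ` P)"
  shows "b \<in> S \<and> {a,b} \<in> f S"
proof -
  obtain S' where S': "S' \<in> P" "{a,b} \<in> f S'" using assms(3) by auto
  then have "{a,b} \<subseteq> S'" using tree_on_part unfolding induced_edges_def by auto
  then have "S = S'" using part_unique[OF assms(1) S'(1) assms(2)] by auto
  then show ?thesis using S' \<open>{a,b} \<subseteq> S'\<close> by auto
qed

lemma induced_edges_union_trees:
  assumes "S \<in> P"
  shows "induced_edges (\<Union>(f ` P)) S = f S"
proof -
  have "e \<in> f S" if "e \<in> \<Union>(f ` P)" "e \<subseteq> S" for e
  proof -
    have "e \<in> E" using that(1) union_trees_subset by blast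
    then obtain a b where "e = {a,b}" "a \<in> V" "b \<in> V"
      using simple_graph_edgeD[OF simple] by blast
    then show ?thesis using union_trees_edge_in_part[OF assms] that by auto
  qed
  then show ?thesis using tree_on_part[OF assms] assms unfolding induced_edges_def by auto
qed

lemma component_union_trees:
  assumes "S \<in> P" "x \<in> S"
  shows "component V (\<Union>(f ` P)) x = S"
proof
  have closed: "b \<in> S \<and> {a,b} \<in> f S" if "a \<in> S" "{a,b} \<in> \<Union>(f ` P)" for a b
    using union_trees_edge_in_part[OF assms(1) that] .
  show "component V (\<Union>(f ` P)) x \<subseteq> S"
  proof
    fix y assume "y \<in> component V (\<Union>(f ` P)) x"
    then have "(x,y) \<in> (adj V (\<Union>(f ` P)))\<^sup>*" unfolding component_def by simp
    from rtrancl_adj_confined[OF this assms(2) closed] show "y \<in> S" by simp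
  qed
  show "S \<subseteq> component V (\<Union>(f ` P)) x"
  proof
    fix y assume "y \<in> S"
    then have "(x,y) \<in> (adj S (f S))\<^sup>*"
      using tree_on_part[OF assms(1)] assms(2) unfolding is_tree_def connected_graph_def by auto
    moreover have "S \<subseteq> V" using partition assms(1) unfolding partition_on_def by auto
    moreover have "f S \<subseteq> \<Union>(f ` P)" using assms(1) by auto
    ultimately have "(x,y) \<in> (adj V (\<Union>(f ` P)))\<^sup>*" using rtrancl_adj_mono by metis
    then show "y \<in> component V (\<Union>(f ` P)) x"
      using \<open>y \<in> S\<close> \<open>S \<subseteq> V\<close> unfolding component_def by auto
  qed
qed

lemma components_union_trees: "components V (\<Union>(f ` P)) = P"
proof -
  have "\<forall>x\<in>V. \<exists>S\<in>P. x \<in> S" "\<forall>S\<in>P. S \<noteq> {} \<and> S \<subseteq> V"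
    using partition unfolding partition_on_def by auto
  then show ?thesis
    unfolding components_eq_image using component_union_trees by (auto simp: image_iff) blast
qed

lemma forest_union_trees: "forest V (\<Union>(f ` P))"
  unfolding forest_def
proof (intro allI impI notI)
  fix a b assume ab: "{a,b} \<in> \<Union>(f ` P)"
    and path: "(a,b) \<in> (adj V (\<Union>(f ` P) - {{a,b}}))\<^sup>*"
  obtain S where S: "S \<in> P" "{a,b} \<in> f S" using ab by auto
  then have abS: "a \<in> S" "b \<in> S" using tree_on_part unfolding induced_edges_def by auto
  have "(a,b) \<in> (adj S (f S - {{a,b}}))\<^sup>*"
    using rtrancl_adj_confined[OF path abS(1)] union_trees_edge_in_part[OF S(1)] by auto
  then have "connected_graph S (f S - {{a,b}})"
    using connected_graph_remove_edge_iff[of S "f S" a b] tree_on_part[OF S(1)] S abS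
    unfolding is_tree_def by auto
  then show False using tree_on_part[OF S(1)] S unfolding is_tree_def by auto
qed

end

lemma tree_eq_cut_union_pieces:
  assumes "simple_graph V T" "F \<subseteq> T"
  shows "T = F \<union> \<Union>((\<lambda>C. induced_edges (T - F) C) ` components V (T - F))"
proof -
  have "e \<in> \<Union>((\<lambda>C. induced_edges (T - F) C) ` components V (T - F))"
    if e: "e \<in> T - F" for e
  proof -
    obtain u v where uv: "e = {u,v}" "u \<in> V" "v \<in> V"
      using simple_graph_edgeD[OF assms(1) DiffD1[OF e]] by blast
    then have "e \<subseteq> component V (T - F) u"
      using rtrancl_adj_edge[OF uv(2,3)] e component_self[OF uv(2)]
      unfolding component_def by auto
    then show ?thesis using uv e unfolding components_eq_image induced_edges_def by auto
  qed
  then show ?thesis using assms(2) unfolding induced_edges_def by auto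
qed

lemma card_edges_le_square: "simple_graph V E \<Longrightarrow> card E \<le> card V ^ 2"
proof -
  assume simple: "simple_graph V E"
  then have "E \<subseteq> (\<lambda>(u,v). {u,v}) ` (V \<times> V)"
    using simple_graph_edgeD by fastforce
  moreover have "finite V" using simple unfolding simple_graph_def by auto
  ultimately have "card E \<le> card (V \<times> V)"
    using surj_card_le[of "V \<times> V"] by blast
  then show ?thesis by (simp add: card_cartesian_product power2_eq_square)
qed

lemma card_edge_subsets_le:
  assumes "simple_graph V E" "T \<subseteq> E"
  shows "card {F. F \<subseteq> T \<and> card F = j} \<le> card V ^ (2 * j)"
proof -
  have "finite T" using assms simple_graph_finite_edges finite_subset by blast
  have "card {F. F \<subseteq> T \<and> card F = j} = card T choose j"
    using n_subsets[OF \<open>finite T\<close>] by simp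
  also have "\<dots> \<le> card T ^ j"
    by (cases "j \<le> card T") (simp_all add: binomial_le_pow binomial_eq_0)
  also have "\<dots> \<le> (card V ^ 2) ^ j"
    using card_mono[OF simple_graph_finite_edges[OF assms(1)] assms(2)]
      card_edges_le_square[OF assms(1)]
    by (intro power_mono) simp_all
  finally show ?thesis by (simp add: power_mult)
qed

definition balanced_cuts ::
    "nat \<Rightarrow> 'a set \<Rightarrow> 'a set set \<Rightarrow> ('a set set \<times> 'a set set) set" where
  "balanced_cuts k V E = {(T,F). T \<in> spanning_trees V E \<and> F \<subseteq> T \<and> card F = k - 1 \<and>
     card (components V (T - F)) = k \<and>
     (\<forall>A\<in>components V (T - F). \<forall>B\<in>components V (T - F). card A = card B)}"

lemma mem_balanced_cuts:
  "(T,F) \<in> balanced_cuts k V E \<longleftrightarrow> T \<in> spanning_trees V E \<and> F \<subseteq> T \<and> card F = k - 1 \<and>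
     card (components V (T - F)) = k \<and>
     (\<forall>A\<in>components V (T - F). \<forall>B\<in>components V (T - F). card A = card B)"
  unfolding balanced_cuts_def by (simp only: mem_Collect_eq prod.case)

definition forested_partitions ::
    "nat \<Rightarrow> 'a set \<Rightarrow> 'a set set \<Rightarrow> ('a set set \<times> ('a set \<Rightarrow> 'a set set)) set" where
  "forested_partitions k V E = (SIGMA P:{P. balanced_connected_partition k V E P}.
     \<Pi>\<^sub>E S\<in>P. spanning_trees S (induced_edges E S))"

definition cut_partition ::
    "'a set \<Rightarrow> 'a set set \<Rightarrow> 'a set set \<Rightarrow> 'a set set \<times> ('a set \<Rightarrow> 'a set set)" where
  "cut_partition V T F =
    (components V (T - F), \<lambda>C\<in>components V (T - F). induced_edges (T - F) C)"

lemma splittable_trees_eq_image_balanced_cuts: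
  "{T \<in> spanning_trees V E. splittable k V T} = fst ` balanced_cuts k V E"
  unfolding fst_eq_Domain Domain_unfold balanced_cuts_def splittable_def by blast

lemma finite_spanning_trees: "finite E \<Longrightarrow> finite (spanning_trees V E)"
  unfolding spanning_trees_def by (auto intro: finite_subset[of _ "Pow E"])

lemma finite_balanced_cuts:
  assumes "simple_graph V E" shows "finite (balanced_cuts k V E)"
proof (rule finite_subset)
  show "balanced_cuts k V E \<subseteq> spanning_trees V E \<times> Pow E"
    unfolding balanced_cuts_def spanning_trees_def by auto
  show "finite (spanning_trees V E \<times> Pow E)"
    using finite_spanning_trees[OF simple_graph_finite_edges[OF assms]]
      simple_graph_finite_edges[OF assms] by simp
qed

lemma finite_spanning_trees_induced:
  "finite E \<Longrightarrow> finite (spanning_trees S (induced_edges E S))"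
  by (rule finite_spanning_trees) (simp add: induced_edges_def)

lemma finite_balanced_connected_partitions:
  "finite V \<Longrightarrow> finite {P. balanced_connected_partition k V E P}"
  unfolding balanced_connected_partition_def connected_partition_def
  by (rule finite_subset[OF _ finitely_many_partition_on]) auto

lemma finite_balanced_connected_partition:
  "finite V \<Longrightarrow> balanced_connected_partition k V E P \<Longrightarrow> finite P"
  unfolding balanced_connected_partition_def connected_partition_def
  by (auto intro: finite_elements)

lemma finite_forested_partitions:
  assumes "simple_graph V E" shows "finite (forested_partitions k V E)"
proof -
  have "finite V" using assms unfolding simple_graph_def by simp
  then show ?thesis
    unfolding forested_partitions_def
    using finite_balanced_connected_partitions finite_balanced_connected_partition
      finite_spanning_trees_induced[OF simple_graph_finite_edges[OF assms]]
    by (auto intro!: finite_SigmaI finite_PiE)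
qed

lemma card_forested_partitions:
  assumes "simple_graph V E" shows "card (forested_partitions k V E) = B_k k V E"
proof -
  have fin_V: "finite V" using assms unfolding simple_graph_def by simp
  have fin_trees: "finite (spanning_trees S (induced_edges E S))" for S
    using finite_spanning_trees_induced[OF simple_graph_finite_edges[OF assms]] .
  have "card (forested_partitions k V E) =
      (\<Sum>P\<in>{P. balanced_connected_partition k V E P}.
         card (\<Pi>\<^sub>E S\<in>P. spanning_trees S (induced_edges E S)))"
    unfolding forested_partitions_def
    using finite_balanced_connected_partitions[OF fin_V]
      finite_balanced_connected_partition[OF fin_V] fin_trees
    by (intro card_SigmaI) (auto intro: finite_PiE)
  also have "\<dots> = B_k k V E"
    unfolding B_k_def st_weight_def num_spanning_trees_def
    using finite_balanced_connected_partition[OF fin_V]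
    by (intro sum.cong refl) (simp add: card_PiE)
  finally show ?thesis .
qed

lemma cut_partition_in_forested_partitions:
  assumes "simple_graph V E" "(T,F) \<in> balanced_cuts k V E"
  shows "cut_partition V T F \<in> forested_partitions k V E"
proof -
  have T: "T \<in> spanning_trees V E" and cut: "card (components V (T - F)) = k"
    "\<forall>A\<in>components V (T - F). \<forall>B\<in>components V (T - F). card A = card B"
    using assms(2) unfolding mem_balanced_cuts by blast+
  have trees: "induced_edges (T - F) C \<in> spanning_trees C (induced_edges E C)"
    if "C \<in> components V (T - F)" for C
    by (rule spanning_tree_of_component[OF assms(1) T Diff_subset that])
  have "\<forall>C\<in>components V (T - F). connected_graph C (induced_edges E C)"
    using spanning_trees_imp_connected[OF trees] by blast
  then have "balanced_connected_partition k V E (components V (T - F))"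
    unfolding balanced_connected_partition_def connected_partition_def
    using partition_on_components[of V "T - F"] cut by blast
  then show ?thesis
    unfolding cut_partition_def forested_partitions_def using trees
    by (simp add: restrict_PiE_iff)
qed

lemma forested_partitions_subset_cut_partitions:
  assumes "simple_graph V E" "connected_graph V E"
  shows "forested_partitions k V E \<subseteq> (\<lambda>(T,F). cut_partition V T F) ` balanced_cuts k V E"
proof
  fix y assume "y \<in> forested_partitions k V E"
  then obtain P f where y: "y = (P,f)" "balanced_connected_partition k V E P"
    and f: "f \<in> (\<Pi>\<^sub>E S\<in>P. spanning_trees S (induced_edges E S))"
    unfolding forested_partitions_def by blast
  have P: "partition_on V P" "card P = k" "\<forall>A\<in>P. \<forall>B\<in>P. card A = card B"
    using y(2) unfolding balanced_connected_partition_def connected_partition_def by blast+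
  define U where "U = \<Union>(f ` P)"
  have comps: "components V U = P"
    unfolding U_def using components_union_trees[OF assms(1) P(1) f] .
  have "\<exists>T. U \<subseteq> T \<and> T \<subseteq> E \<and> is_tree V T \<and> card (T - U) + 1 = card (components V U)"
    unfolding U_def
    using assms union_trees_subset[OF assms(1) P(1) f] forest_union_trees[OF assms(1) P(1) f]
    by (rule forest_extends_to_spanning_tree)
  then obtain T where T: "U \<subseteq> T" "T \<subseteq> E" "is_tree V T" "card (T - U) + 1 = k"
    unfolding comps P(2) by blast
  have TU: "T - (T - U) = U" using double_diff[OF T(1) order_refl] .
  have "(T, T - U) \<in> balanced_cuts k V E"
    unfolding mem_balanced_cuts TU comps
  proof (intro conjI)
    show "T \<in> spanning_trees V E" using T(2,3) unfolding spanning_trees_def by simp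
    show "card (T - U) = k - 1" using T(4) by simp
  qed (use P(2,3) in blast)+
  moreover have "(\<lambda>C\<in>P. induced_edges U C) = (\<lambda>C\<in>P. f C)"
    unfolding U_def using induced_edges_union_trees[OF assms(1) P(1) f] by (rule restrict_ext)
  then have "cut_partition V T (T - U) = y"
    unfolding cut_partition_def TU comps y(1) PiE_restrict[OF f] by (rule arg_cong)
  ultimately show "y \<in> (\<lambda>(T,F). cut_partition V T F) ` balanced_cuts k V E"
    by (auto intro: rev_image_eqI)
qed

lemma balanced_cut_eq_cut_union_pieces:
  assumes "simple_graph V E" "(T,F) \<in> balanced_cuts k V E"
  shows "T = F \<union> \<Union>(snd (cut_partition V T F) ` fst (cut_partition V T F))"
proof -
  have "T \<subseteq> E" "F \<subseteq> T"
    using assms(2) unfolding mem_balanced_cuts spanning_trees_def by auto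
  from tree_eq_cut_union_pieces[OF simple_graph_mono[OF assms(1) this(1)] this(2)] show ?thesis
    unfolding cut_partition_def fst_conv snd_conv image_restrict_eq .
qed

lemma inj_on_cut_partition_and_cut:
  assumes "simple_graph V E"
  shows "inj_on (\<lambda>(T,F). (cut_partition V T F, F)) (balanced_cuts k V E)"
proof -
  have "T = T'"
    if "(T,F) \<in> balanced_cuts k V E" "(T',F) \<in> balanced_cuts k V E"
      "cut_partition V T F = cut_partition V T' F" for T T' F
  proof -
    have "T = F \<union> \<Union>(snd (cut_partition V T' F) ` fst (cut_partition V T' F))"
      using balanced_cut_eq_cut_union_pieces[OF assms that(1)] unfolding that(3) .
    also have "\<dots> = T'" using balanced_cut_eq_cut_union_pieces[OF assms that(2)] by (rule sym)
    finally show ?thesis .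
  qed
  then show ?thesis unfolding inj_on_def by auto
qed

lemma tau_k_le_card_balanced_cuts:
  "simple_graph V E \<Longrightarrow> tau_k k V E \<le> card (balanced_cuts k V E)"
  unfolding tau_k_def splittable_trees_eq_image_balanced_cuts
  by (intro card_image_le finite_balanced_cuts)

lemma card_balanced_cuts_le_tau_k:
  assumes "simple_graph V E"
  shows "card (balanced_cuts k V E) \<le> card V ^ (2 * (k - 1)) * tau_k k V E"
proof -
  let ?S = "fst ` balanced_cuts k V E"
  let ?cuts = "\<lambda>T. {F. F \<subseteq> T \<and> card F = k - 1}"
  have S_sub: "T \<subseteq> E" if T: "T \<in> ?S" for T
  proof -
    obtain F where "(T,F) \<in> balanced_cuts k V E" using T by force
    then show ?thesis unfolding mem_balanced_cuts spanning_trees_def by blast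
  qed
  have fin_cuts: "finite (?cuts T)" if "T \<in> ?S" for T
    using S_sub[OF that] finite_subset[OF _ simple_graph_finite_edges[OF assms]] by auto
  have "(T,F) \<in> Sigma ?S ?cuts" if "(T,F) \<in> balanced_cuts k V E" for T F
  proof (rule SigmaI)
    show "T \<in> ?S" by (rule rev_image_eqI[OF that]) simp
    show "F \<in> ?cuts T" using that unfolding mem_balanced_cuts by blast
  qed
  then have "balanced_cuts k V E \<subseteq> Sigma ?S ?cuts" by auto
  then have "card (balanced_cuts k V E) \<le> card (Sigma ?S ?cuts)"
    using finite_balanced_cuts[OF assms] fin_cuts by (intro card_mono finite_SigmaI) auto
  also have "\<dots> = (\<Sum>T\<in>?S. card (?cuts T))"
    using finite_balanced_cuts[OF assms] fin_cuts by (intro card_SigmaI) auto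
  also have "\<dots> \<le> (\<Sum>T\<in>?S. card V ^ (2 * (k - 1)))"
    using card_edge_subsets_le[OF assms S_sub] by (intro sum_mono) auto
  also have "\<dots> = card V ^ (2 * (k - 1)) * tau_k k V E"
    unfolding tau_k_def splittable_trees_eq_image_balanced_cuts by simp
  finally show ?thesis .
qed

lemma B_k_le_card_balanced_cuts:
  assumes "simple_graph V E" "connected_graph V E"
  shows "B_k k V E \<le> card (balanced_cuts k V E)"
  unfolding card_forested_partitions[OF assms(1), symmetric]
  by (rule surj_card_le[OF finite_balanced_cuts[OF assms(1)]
        forested_partitions_subset_cut_partitions[OF assms]])

lemma card_balanced_cuts_le_B_k:
  assumes "simple_graph V E"
  shows "card (balanced_cuts k V E) \<le> B_k k V E * card V ^ (2 * (k - 1))"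
proof -
  let ?Z = "{F. F \<subseteq> E \<and> card F = k - 1}"
  have "(cut_partition V T F, F) \<in> forested_partitions k V E \<times> ?Z"
    if "(T,F) \<in> balanced_cuts k V E" for T F
    using cut_partition_in_forested_partitions[OF assms that] that
    unfolding mem_balanced_cuts spanning_trees_def by auto
  then have sub: "(\<lambda>(T,F). (cut_partition V T F, F)) ` balanced_cuts k V E
      \<subseteq> forested_partitions k V E \<times> ?Z"
    by auto
  have fin_Z: "finite ?Z" using simple_graph_finite_edges[OF assms] by simp
  have "card (balanced_cuts k V E) =
      card ((\<lambda>(T,F). (cut_partition V T F, F)) ` balanced_cuts k V E)"
    using card_image[OF inj_on_cut_partition_and_cut[OF assms]] by simp
  also have "\<dots> \<le> card (forested_partitions k V E \<times> ?Z)"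
    using sub finite_forested_partitions[OF assms] fin_Z by (intro card_mono) auto
  also have "\<dots> = B_k k V E * card ?Z"
    by (simp add: card_cartesian_product card_forested_partitions[OF assms])
  also have "\<dots> \<le> B_k k V E * card V ^ (2 * (k - 1))"
    using card_edge_subsets_le[OF assms order_refl] by simp
  finally show ?thesis .
qed

theorem mainTheorem9:
  fixes V :: "'a set" and E :: "'a set set" and k :: nat
  assumes "simple_graph V E" and "connected_graph V E" and "k \<ge> 1"
  shows "real (tau_k k V E) / real (card V) ^ (2 * (k - 1)) \<le> real (B_k k V E)
       \<and> real (B_k k V E) \<le> real (card V) ^ (2 * (k - 1)) * real (tau_k k V E)"
proof
  let ?N = "card V ^ (2 * (k - 1))"
  have "?N > 0"
    using assms(1,2) unfolding simple_graph_def connected_graph_def by (simp add: card_gt_0_iff)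
  have "tau_k k V E \<le> B_k k V E * ?N"
    using tau_k_le_card_balanced_cuts card_balanced_cuts_le_B_k assms(1) le_trans by blast
  then have "real (tau_k k V E) \<le> real (B_k k V E) * real ?N"
    by (metis of_nat_le_iff of_nat_mult)
  then show "real (tau_k k V E) / real (card V) ^ (2 * (k - 1)) \<le> real (B_k k V E)"
    using \<open>?N > 0\<close> by (simp add: divide_le_eq)
  have "B_k k V E \<le> ?N * tau_k k V E"
    using B_k_le_card_balanced_cuts card_balanced_cuts_le_tau_k assms(1,2) le_trans by blast
  then show "real (B_k k V E) \<le> real (card V) ^ (2 * (k - 1)) * real (tau_k k V E)"
    by (metis of_nat_le_iff of_nat_mult of_nat_power)
qed

end
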